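(* Let $m\ge n$, let $\mathcal{U}\subseteq\mathbb{R}$, and let $F:\mathcal{U}\rightarrow M_{m\times n}(\mathbb{C})$ be defined by $F(x)=\sum_{k=0}^{p}A_k x^k$, where $A_k\in M_{m\times n}(\mathbb{C})$ for $k=0,1,\dots,p$. Let $\mathcal{Y}(\mathcal{U})=\{x\in\mathcal{U} : F(x)\text{ has repeated singular values}\}$. Then either $\mathcal{Y}(\mathcal{U})=\mathcal{U}$ or $\mathcal{Y}(\mathcal{U})$ is finite.
   Context: $M_{m\times n}(\mathbb{C})$ denotes the set of $m\times n$ complex matrices; throughout $m\ge n$. The singular values of $A\in M_{m\times n}(\mathbb{C})$ are the $n$ nonnegative square roots of the eigenvalues of $A^{\ast}A$, counted with multiplicity; $A$ has repeated singular values if two of these $n$ values coincide. *)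

theory Defs
  imports "Jordan_Normal_Form.Char_Poly" "HOL-Computational_Algebra.Polynomial"
begin

definition conj_transpose :: "complex mat \<Rightarrow> complex mat" where
  "conj_transpose A = mat (dim_col A) (dim_row A) (\<lambda>(i,j). cnj (A $$ (j,i)))"

definition singular_values :: "complex mat \<Rightarrow> real multiset" where
  "singular_values A =
     image_mset (\<lambda>z. sqrt (Re z)) (proots (char_poly (conj_transpose A * A)))"

definition has_repeated_singular_values :: "complex mat \<Rightarrow> bool" where
  "has_repeated_singular_values A \<longleftrightarrow> (\<exists>s. count (singular_values A) s \<ge> 2)"

definition mat_poly_eval :: "nat \<Rightarrow> nat \<Rightarrow> (nat \<Rightarrow> complex mat) \<Rightarrow> nat \<Rightarrow> real \<Rightarrow> complex mat" where
  "mat_poly_eval m n A p x =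
     mat m n (\<lambda>(i,j). \<Sum>k=0..p. A k $$ (i,j) * complex_of_real x ^ k)"

end

theory Submission
  imports
    Defs
    "HOL-Computational_Algebra.Field_as_Ring"
    "HOL-Computational_Algebra.Fundamental_Theorem_Algebra"
    "Subresultants.Subresultant_Gcd"
begin

(* The eigenvalues of F(x)^* F(x) are real and nonnegative, and sqrt is injective on them, so F(x)
   has a repeated singular value iff the characteristic polynomial of F(x)^* F(x) has a repeated
   root, i.e. iff its resultant with its derivative vanishes. For real x, F(x)^* F(x) is the value
   at x of the polynomial matrix F^H F, where F^H conjugates the coefficients and transposes; since
   characteristic polynomials are monic, forming the resultant commutes with evaluation at x. Hence
   the x with repeated singular values are the real roots of one fixed complex polynomial D:
   all of U if D = 0, finitely many otherwise. *)

lemma conj_transpose_carrier_mat [simp]: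
  "B \<in> carrier_mat m n \<Longrightarrow> conj_transpose B \<in> carrier_mat n m"
  by (simp add: conj_transpose_def)

lemma conj_transpose_conv_transpose: "conj_transpose B = transpose_mat (map_mat cnj B)"
  by (auto simp: conj_transpose_def intro!: eq_matI)

lemma map_mat_cnj_mult_mat_vec:
  assumes "B \<in> carrier_mat m n" "v \<in> carrier_vec n"
  shows "map_mat cnj B *\<^sub>v conjugate v = conjugate (B *\<^sub>v v)"
  using assms by (auto simp: scalar_prod_def cnj_sum intro!: eq_vecI sum.cong)

lemma cscalar_prod_conj_transpose:
  fixes B :: "complex mat"
  assumes B: "B \<in> carrier_mat m n" and v: "v \<in> carrier_vec n" and w: "w \<in> carrier_vec m"
  shows "(conj_transpose B *\<^sub>v w) \<bullet>c v = w \<bullet>c (B *\<^sub>v v)"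
  unfolding conj_transpose_conv_transpose map_mat_cnj_mult_mat_vec[OF B v, symmetric]
  by (rule transpose_vec_mult_scalar) (use B v w in auto)

text \<open>Here \<open>\<le>\<close> is the partial order of \<open>Complex_Order\<close>: \<open>0 \<le> z\<close> means that \<open>z\<close> is real
  and nonnegative.\<close>

lemma eigenvalue_conj_transpose_mult_nonneg:
  fixes B :: "complex mat"
  assumes B: "B \<in> carrier_mat m n" and z: "eigenvalue (conj_transpose B * B) z"
  shows "0 \<le> z"
proof -
  have B': "conj_transpose B \<in> carrier_mat n m" using B by simp
  obtain v where v: "v \<in> carrier_vec n" "v \<noteq> 0\<^sub>v n" "conj_transpose B *\<^sub>v (B *\<^sub>v v) = z \<cdot>\<^sub>v v"
    using z B B' unfolding eigenvalue_def eigenvector_def by (auto simp: assoc_mult_mat_vec[OF B' B])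
  let ?w = "B *\<^sub>v v"
  have "z * (v \<bullet>c v) = (z \<cdot>\<^sub>v v) \<bullet>c v"
    using v(1) by simp
  also have "\<dots> = (conj_transpose B *\<^sub>v ?w) \<bullet>c v"
    using B B' v by (simp flip: v(3))
  also have "\<dots> = ?w \<bullet>c ?w"
    using B v by (intro cscalar_prod_conj_transpose) auto
  finally have eq: "z * (v \<bullet>c v) = ?w \<bullet>c ?w" .
  have a: "Im (v \<bullet>c v) = 0" "Re (v \<bullet>c v) > 0" and b: "Im (?w \<bullet>c ?w) = 0" "Re (?w \<bullet>c ?w) \<ge> 0"
    using conjugate_square_greater_0_vec[OF v(1)] v(2) conjugate_square_ge_0_vec[of ?w]
    by (auto simp: less_complex_def less_eq_complex_def simp del: conjugate_square_ge_0_vec)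
  have "Re z * Re (v \<bullet>c v) = Re (?w \<bullet>c ?w)" "Im z * Re (v \<bullet>c v) = Im (?w \<bullet>c ?w)"
    using arg_cong[where f = Re, OF eq] arg_cong[where f = Im, OF eq] a(1) by simp_all
  then have "0 \<le> Re z * Re (v \<bullet>c v)" "Im z = 0" using a b by simp_all
  then show ?thesis
    using a by (simp add: less_eq_complex_def zero_le_mult_iff)
qed

lemma ex_count_image_mset_ge_2_iff:
  assumes "inj_on f (set_mset M)"
  shows "(\<exists>s. count (image_mset f M) s \<ge> 2) \<longleftrightarrow> (\<exists>z. count M z \<ge> 2)"
proof -
  have count_f: "count (image_mset f M) (f z) = count M z" if "z \<in># M" for z
  proof -
    have "f -` {f z} \<inter> set_mset M = {z}" using assms that by (auto simp: inj_on_def)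
    then show ?thesis by (simp add: count_image_mset)
  qed
  show ?thesis
  proof
    assume "\<exists>s. count (image_mset f M) s \<ge> 2"
    then obtain s where s: "count (image_mset f M) s \<ge> 2" by blast
    then have "s \<in># image_mset f M" by (intro count_inI) simp
    then obtain z where "z \<in># M" "s = f z" by auto
    with s count_f show "\<exists>z. count M z \<ge> 2" by auto
  next
    assume "\<exists>z. count M z \<ge> 2"
    then obtain z where z: "count M z \<ge> 2" by blast
    then have "z \<in># M" by (intro count_inI) simp
    with z count_f show "\<exists>s. count (image_mset f M) s \<ge> 2" by metis
  qed
qed

lemma resultant_eq_0_iff_common_root:
  fixes p q :: "complex poly"
  assumes "p \<noteq> 0"
  shows "resultant p q = 0 \<longleftrightarrow> (\<exists>z. poly p z = 0 \<and> poly q z = 0)"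
proof -
  let ?g = "gcd p q"
  have "?g \<noteq> 0" using assms by simp
  have "resultant p q = 0 \<longleftrightarrow> degree ?g \<noteq> 0" by (rule resultant_0_gcd)
  also have "\<dots> \<longleftrightarrow> (\<exists>z. poly ?g z = 0)"
  proof
    assume "degree ?g \<noteq> 0"
    then show "\<exists>z. poly ?g z = 0" by (simp add: fundamental_theorem_of_algebra constant_degree)
  next
    assume "\<exists>z. poly ?g z = 0"
    then obtain z where z: "poly ?g z = 0" by blast
    show "degree ?g \<noteq> 0"
    proof
      assume "degree ?g = 0"
      then obtain a where "?g = [:a:]" by (rule degree_eq_zeroE)
      with z \<open>?g \<noteq> 0\<close> show False by simp
    qed
  qed
  also have "\<dots> \<longleftrightarrow> (\<exists>z. poly p z = 0 \<and> poly q z = 0)" by (simp add: poly_eq_0_iff_dvd)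
  finally show ?thesis .
qed

lemma resultant_pderiv_eq_0_iff:
  fixes c :: "complex poly"
  assumes "c \<noteq> 0"
  shows "resultant c (pderiv c) = 0 \<longleftrightarrow> (\<exists>z. count (proots c) z \<ge> 2)"
proof -
  have "resultant c (pderiv c) = 0 \<longleftrightarrow> \<not> rsquarefree c"
    using assms by (simp add: resultant_eq_0_iff_common_root rsquarefree_roots)
  also have "\<dots> \<longleftrightarrow> (\<exists>z. order z c \<ge> 2)"
  proof -
    have "(order z c = 0 \<or> order z c = 1) \<longleftrightarrow> \<not> order z c \<ge> 2" for z by auto
    then show ?thesis using assms unfolding rsquarefree_def by auto
  qed
  finally show ?thesis using assms by simp
qed

text \<open>Up to sign this is the discriminant of the (monic) characteristic polynomial.\<close>

definition char_poly_disc :: "'a :: idom mat \<Rightarrow> 'a" where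
  "char_poly_disc M = resultant (char_poly M) (pderiv (char_poly M))"

lemma has_repeated_singular_values_iff_char_poly_disc:
  assumes B: "B \<in> carrier_mat m n"
  shows "has_repeated_singular_values B \<longleftrightarrow> char_poly_disc (conj_transpose B * B) = 0"
proof -
  let ?M = "conj_transpose B * B"
  have M: "?M \<in> carrier_mat n n" by (rule mult_carrier_mat[OF conj_transpose_carrier_mat[OF B] B])
  then have "char_poly ?M \<noteq> 0" using degree_monic_char_poly[OF M] by auto
  have "0 \<le> z" if "z \<in># proots (char_poly ?M)" for z
    using that \<open>char_poly ?M \<noteq> 0\<close> eigenvalue_root_char_poly[OF M]
    by (auto intro: eigenvalue_conj_transpose_mult_nonneg[OF B])
  then have "inj_on (\<lambda>z. sqrt (Re z)) (set_mset (proots (char_poly ?M)))"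
    by (auto simp: inj_on_def less_eq_complex_def complex_eq_iff)
  then show ?thesis
    unfolding has_repeated_singular_values_def singular_values_def char_poly_disc_def
    by (simp add: ex_count_image_mset_ge_2_iff resultant_pderiv_eq_0_iff \<open>char_poly ?M \<noteq> 0\<close>)
qed

lemma resultant_pderiv_map_poly:
  fixes h :: "'a :: idom \<Rightarrow> 'b :: {idom, ring_char_0}"
  assumes "idom_hom h" and "h (lead_coeff c) \<noteq> 0"
  shows "resultant (map_poly h c) (pderiv (map_poly h c)) = h (resultant c (pderiv c))"
proof -
  interpret idom_hom h by fact
  have deg: "degree (map_poly h c) = degree c"
    by (rule Ring_Hom_Poly.degree_map_poly) (use assms(2) in auto)
  have "degree (pderiv (map_poly h c)) = degree c - 1"
    using deg by (simp add: degree_pderiv)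
  moreover have "degree (map_poly h (pderiv c)) \<le> degree (pderiv c)"
    by (rule degree_map_poly_le)
  moreover have "degree (pderiv c) \<le> degree c - 1"
    by (rule degree_pderiv_le)
  ultimately have deg': "degree (map_poly h (pderiv c)) = degree (pderiv c)"
    by (simp add: map_poly_pderiv)
  show ?thesis
    using resultant_map_poly[OF deg deg'] by (simp add: map_poly_pderiv)
qed

lemma char_poly_disc_hom:
  fixes h :: "'a :: idom \<Rightarrow> 'b :: {idom, ring_char_0}"
  assumes h: "idom_hom h" and M: "M \<in> carrier_mat n n"
  shows "char_poly_disc (map_mat h M) = h (char_poly_disc M)"
proof -
  interpret idom_hom h by fact
  have "monic (char_poly M)" using degree_monic_char_poly[OF M] by simp
  then show ?thesis
    unfolding char_poly_disc_def char_poly_hom[OF M]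
    by (intro resultant_pderiv_map_poly h) simp
qed

definition poly_mat_of_coeffs :: "nat \<Rightarrow> nat \<Rightarrow> (nat \<Rightarrow> complex mat) \<Rightarrow> nat \<Rightarrow> complex poly mat" where
  "poly_mat_of_coeffs m n A p = mat m n (\<lambda>(i,j). \<Sum>k=0..p. monom (A k $$ (i,j)) k)"

text \<open>Only the coefficients are conjugated, so evaluation commutes with this operation at real
  points only.\<close>

definition conj_transpose_poly_mat :: "complex poly mat \<Rightarrow> complex poly mat" where
  "conj_transpose_poly_mat P = transpose_mat (map_mat (map_poly cnj) P)"

lemma map_mat_poly_poly_mat_of_coeffs:
  "map_mat (\<lambda>q. poly q (complex_of_real x)) (poly_mat_of_coeffs m n A p) = mat_poly_eval m n A p x"
  by (auto simp: poly_mat_of_coeffs_def mat_poly_eval_def poly_sum poly_monom intro!: eq_matI)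

lemma map_mat_poly_conj_transpose_poly_mat:
  fixes x :: real
  shows "map_mat (\<lambda>q. poly q (complex_of_real x)) (conj_transpose_poly_mat P)
    = conj_transpose (map_mat (\<lambda>q. poly q (complex_of_real x)) P)"
proof -
  have "poly (map_poly cnj q) (complex_of_real x) = cnj (poly q (complex_of_real x))" for q
    by (simp only: poly_cnj complex_cnj_complex_of_real)
  then show ?thesis
    unfolding conj_transpose_poly_mat_def conj_transpose_def by (intro eq_matI) auto
qed

lemma map_mat_poly_conj_transpose_poly_mat_mult:
  fixes x :: real
  assumes P: "P \<in> carrier_mat m n"
  defines "ev \<equiv> map_mat (\<lambda>q. poly q (complex_of_real x))"
  shows "ev (conj_transpose_poly_mat P * P) = conj_transpose (ev P) * ev P"
proof -
  note ev_hom = poly_hom.semiring_hom_axioms[where a = "complex_of_real x"]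
  have "conj_transpose_poly_mat P \<in> carrier_mat n m"
    using P by (simp add: conj_transpose_poly_mat_def)
  from semiring_hom.mat_hom_mult[OF ev_hom this P] show ?thesis
    unfolding ev_def map_mat_poly_conj_transpose_poly_mat .
qed

lemma finite_real_roots:
  fixes D :: "complex poly"
  assumes "D \<noteq> 0"
  shows "finite {x :: real. poly D (of_real x) = 0}"
proof -
  have "finite (complex_of_real -` {z. poly D z = 0})"
    by (rule finite_vimageI[OF poly_roots_finite[OF assms]]) (simp add: inj_on_def)
  then show ?thesis by simp
qed

lemma has_repeated_singular_values_mat_poly_eval_iff:
  fixes m n p :: nat and A :: "nat \<Rightarrow> complex mat" and x :: real
  defines "P \<equiv> poly_mat_of_coeffs m n A p"
  shows "has_repeated_singular_values (mat_poly_eval m n A p x)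
    \<longleftrightarrow> poly (char_poly_disc (conj_transpose_poly_mat P * P)) (of_real x) = 0"
proof -
  let ?ev = "map_mat (\<lambda>q. poly q (complex_of_real x))"
  let ?F = "mat_poly_eval m n A p x"
  have P: "P \<in> carrier_mat m n"
    by (simp add: P_def poly_mat_of_coeffs_def)
  have F: "?ev P = ?F"
    unfolding P_def by (rule map_mat_poly_poly_mat_of_coeffs)
  have "conj_transpose_poly_mat P * P \<in> carrier_mat n n"
    using P by (simp add: conj_transpose_poly_mat_def)
  then have "poly (char_poly_disc (conj_transpose_poly_mat P * P)) (of_real x)
      = char_poly_disc (?ev (conj_transpose_poly_mat P * P))"
    by (rule char_poly_disc_hom[OF poly_hom.idom_hom_axioms, symmetric])
  also have "\<dots> = char_poly_disc (conj_transpose ?F * ?F)"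
    by (simp only: map_mat_poly_conj_transpose_poly_mat_mult[OF P] F)
  finally show ?thesis
    by (simp add: has_repeated_singular_values_iff_char_poly_disc[where m = m and n = n]
        mat_poly_eval_def)
qed

theorem theorem3p9:
  fixes m n p :: nat and U :: "real set" and A :: "nat \<Rightarrow> complex mat"
  assumes "n \<le> m"
    and "\<forall>k\<le>p. A k \<in> carrier_mat m n"
  shows "{x \<in> U. has_repeated_singular_values (mat_poly_eval m n A p x)} = U
       \<or> finite {x \<in> U. has_repeated_singular_values (mat_poly_eval m n A p x)}"
proof -
  define D where "D = char_poly_disc (conj_transpose_poly_mat (poly_mat_of_coeffs m n A p)
    * poly_mat_of_coeffs m n A p)"
  have repeated_iff: "has_repeated_singular_values (mat_poly_eval m n A p x)
      \<longleftrightarrow> poly D (of_real x) = 0" for x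
    unfolding D_def by (rule has_repeated_singular_values_mat_poly_eval_iff)
  show ?thesis
  proof (cases "D = 0")
    case True
    then show ?thesis by (simp add: repeated_iff)
  next
    case False
    have "{x \<in> U. poly D (of_real x) = 0} \<subseteq> {x. poly D (of_real x) = 0}" by blast
    with finite_real_roots[OF False] show ?thesis
      by (simp add: repeated_iff finite_subset)
  qed
qed

end
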